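(* Let $c\in[0,1]$. There exists a countable collection of languages $\mathcal{L}$ such that no set-based generator can generate in the limit from $\mathcal{L}$ and achieve set-based upper density at least $1-c+\varepsilon$, for any $\varepsilon>0$, under adversaries that use an enumeration without noise and with $c$-omissions.
   Context: The universe is $U=\mathbb{N}$ with its natural order. A language is an infinite subset of $U$; a collection is a countable family of languages. For $A,B\subseteq\mathbb{N}$ with $B=\{b_1<b_2<\cdots\}$, $\mu_{\rm up}(A,B)=\limsup_n\frac1n|A\cap\{b_1,\dots,b_n\}|$ and $\mu_{\rm low}(A,B)=\liminf_n\frac1n|A\cap\{b_1,\dots,b_n\}|$. An enumeration of a set $L$ (without noise or omissions) is a sequence in which every element of $L$ appears exactly once and no other elements appear; $S_n=\{x_1,\dots,x_n\}$. An enumeration of $K$ without noise and with $c$-omissions is an enumeration of some $\hat K\subseteq K$ with $\mu_{\rm low}(\hat K,K)\ge1-c$. A set-based generator is a sequence of maps that, given $x_1,\dots,x_n$ (and knowledge of $\mathcal{L}$, not of $K$), outputs $A_n\subseteq U\setminus S_n$. It generates in the limit if for every $K\in\mathcal{L}$ and admissible enumeration of $K$ there is $n^\star$ with $A_n\subseteq K$ for $n\ge n^\star$; it achieves set-based upper density $\rho$ if $\limsup_n\mu_{\rm low}(A_n,K)\ge\rho$ for every such $K$ and enumeration. *)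

theory Defs
  imports "HOL-Analysis.Analysis" "HOL-Library.Countable_Set" "HOL-Library.Infinite_Set"
begin

text \<open>Lower density of A relative to an infinite set B = {b_1 < b_2 < ...}:
  liminf over n >= 1 of |A \<inter> {b_1,...,b_n}| / n.  Here enumerate B k is b_(k+1).\<close>
definition mu_low :: "nat set \<Rightarrow> nat set \<Rightarrow> ereal" where
  "mu_low A B = liminf (\<lambda>n. ereal (real (card (A \<inter> enumerate B ` {..<Suc n})) / real (Suc n)))"

definition mu_up :: "nat set \<Rightarrow> nat set \<Rightarrow> ereal" where
  "mu_up A B = limsup (\<lambda>n. ereal (real (card (A \<inter> enumerate B ` {..<Suc n})) / real (Suc n)))"

definition is_collection :: "nat set set \<Rightarrow> bool" where
  "is_collection \<L> \<longleftrightarrow> countable \<L> \<and> (\<forall>L\<in>\<L>. infinite L)"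

definition is_enumeration :: "(nat \<Rightarrow> nat) \<Rightarrow> nat set \<Rightarrow> bool" where
  "is_enumeration x L \<longleftrightarrow> inj x \<and> range x = L"

definition is_omission_enum :: "real \<Rightarrow> (nat \<Rightarrow> nat) \<Rightarrow> nat set \<Rightarrow> bool" where
  "is_omission_enum c x K \<longleftrightarrow>
     (\<exists>Khat. Khat \<subseteq> K \<and> mu_low Khat K \<ge> ereal (1 - c) \<and> is_enumeration x Khat)"

text \<open>A set-based generator: the map G applied to the list [x_1,...,x_n] gives A_n
  (the list length encodes n, so this is a sequence of maps).\<close>
definition is_set_generator :: "(nat list \<Rightarrow> nat set) \<Rightarrow> bool" where
  "is_set_generator G \<longleftrightarrow> (\<forall>xs. G xs \<inter> set xs = {})"

abbreviation gen_out :: "(nat list \<Rightarrow> nat set) \<Rightarrow> (nat \<Rightarrow> nat) \<Rightarrow> nat \<Rightarrow> nat set" where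
  "gen_out G x n \<equiv> G (map x [0..<n])"

definition generates_in_limit_omit ::
  "real \<Rightarrow> nat set set \<Rightarrow> (nat list \<Rightarrow> nat set) \<Rightarrow> bool" where
  "generates_in_limit_omit c \<L> G \<longleftrightarrow>
     (\<forall>K\<in>\<L>. \<forall>x. is_omission_enum c x K \<longrightarrow>
        (\<exists>nstar. \<forall>n\<ge>nstar. gen_out G x n \<subseteq> K))"

definition achieves_set_upper_density_omit ::
  "real \<Rightarrow> nat set set \<Rightarrow> (nat list \<Rightarrow> nat set) \<Rightarrow> real \<Rightarrow> bool" where
  "achieves_set_upper_density_omit c \<L> G \<rho> \<longleftrightarrow>
     (\<forall>K\<in>\<L>. \<forall>x. is_omission_enum c x K \<longrightarrow>
        limsup (\<lambda>n. mu_low (gen_out G x n) K) \<ge> ereal \<rho>)"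

end

theory Submission
  imports Defs
begin

text \<open>Take for \<open>\<L>\<close> the periodic sets \<open>{n. n mod q < p}\<close> with \<open>0 < p\<close> and \<open>0 < q\<close>;
  they include \<open>\<nat>\<close> itself. Given \<open>\<epsilon>\<close>, choose \<open>1 - c \<le> p/q < 1 - c + \<epsilon>\<close> and let the
  adversary enumerate \<open>K = {n. n mod q < p}\<close> exactly. This is a legal enumeration of \<open>K\<close>,
  and, because \<open>K\<close> has lower density \<open>p/q \<ge> 1 - c\<close> in \<open>\<nat>\<close>, also a \<open>c\<close>-omission
  enumeration of \<open>\<nat>\<close>. Generating in the limit for the target \<open>K\<close> forces \<open>A\<^sub>n \<subseteq> K\<close>
  eventually, so the density of \<open>A\<^sub>n\<close> in \<open>\<nat>\<close> is eventually at most \<open>p/q < 1 - c + \<epsilon>\<close>,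
  which fails the density requirement for the target \<open>\<nat>\<close>.\<close>

lemma enumerate_UNIV_nat [simp]: "enumerate (UNIV :: nat set) n = n"
proof (induction n)
  case 0
  show ?case by (simp add: enumerate_0)
next
  case (Suc n)
  then show ?case by (auto simp: enumerate_Suc'' intro!: Least_equality)
qed

lemma mu_low_UNIV:
  "mu_low A UNIV = liminf (\<lambda>n. ereal (real (card (A \<inter> {..<Suc n})) / real (Suc n)))"
  by (simp add: mu_low_def)

lemma mu_low_mono:
  assumes "A \<subseteq> B"
  shows "mu_low A K \<le> mu_low B K"
  unfolding mu_low_def
proof (intro Liminf_mono always_eventually allI)
  fix n
  have "card (A \<inter> enumerate K ` {..<Suc n}) \<le> card (B \<inter> enumerate K ` {..<Suc n})"
    using assms by (intro card_mono) auto
  then show "ereal (real (card (A \<inter> enumerate K ` {..<Suc n})) / real (Suc n))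
      \<le> ereal (real (card (B \<inter> enumerate K ` {..<Suc n})) / real (Suc n))"
    by (simp add: divide_right_mono)
qed

lemma mu_low_self:
  assumes "infinite K"
  shows "mu_low K K = 1"
proof -
  have "card (K \<inter> enumerate K ` {..<Suc n}) = Suc n" for n
  proof -
    have "K \<inter> enumerate K ` {..<Suc n} = enumerate K ` {..<Suc n}"
      using enumerate_in_set[OF assms] by auto
    then show ?thesis
      using inj_enumerate[OF assms] by (simp add: card_image inj_on_subset)
  qed
  then show ?thesis
    by (simp add: mu_low_def Liminf_const)
qed

lemma is_omission_enum_enumerate:
  assumes "infinite K'" "K' \<subseteq> K" "ereal (1 - c) \<le> mu_low K' K"
  shows "is_omission_enum c (enumerate K') K"
  using assms inj_enumerate[OF assms(1)] range_enumerate[OF assms(1)]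
  unfolding is_omission_enum_def is_enumeration_def by blast

lemma limsup_mu_low_gen_out_le:
  assumes "generates_in_limit_omit c \<L> G" "K \<in> \<L>" "is_omission_enum c x K"
  shows "limsup (\<lambda>n. mu_low (gen_out G x n) L) \<le> mu_low K L"
proof (rule Limsup_bounded)
  obtain n\<^sub>0 where "\<forall>n\<ge>n\<^sub>0. gen_out G x n \<subseteq> K"
    using assms unfolding generates_in_limit_omit_def by blast
  then show "\<forall>\<^sub>F n in sequentially. mu_low (gen_out G x n) L \<le> mu_low K L"
    unfolding eventually_sequentially by (blast intro: mu_low_mono)
qed

lemma card_Int_lessThan_Suc:
  "card (A \<inter> {..<Suc N}) = card (A \<inter> {..<N}) + (if N \<in> A then 1 else 0)"
proof -
  have "A \<inter> {..<Suc N} = (if N \<in> A then insert N (A \<inter> {..<N}) else A \<inter> {..<N})"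
    by (auto simp: less_Suc_eq)
  then show ?thesis by simp
qed

definition initial_residues :: "nat \<Rightarrow> nat \<Rightarrow> nat set" where
  "initial_residues q p = {n. n mod q < p}"

lemma card_initial_residues_lessThan:
  assumes "0 < q" "p \<le> q"
  shows "card (initial_residues q p \<inter> {..<N}) = p * (N div q) + min (N mod q) p"
proof (induction N)
  case (Suc N)
  then show ?case
    using assms unfolding card_Int_lessThan_Suc
    by (auto simp: initial_residues_def mod_Suc div_Suc)
qed simp

lemma initial_residues_density_lower_bound:
  assumes "0 < q" "p \<le> q" "0 < N"
  shows "real p / real q \<le> real (card (initial_residues q p \<inter> {..<N})) / real N"
proof -
  have "(N mod q) * p \<le> q * min (N mod q) p"
    using assms mod_less_divisor[of q N] by (cases "N mod q \<le> p") (simp_all add: mult_le_mono)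
  moreover have "N * p = p * (q * (N div q)) + (N mod q) * p"
  proof -
    have "N * p = (q * (N div q) + N mod q) * p" by simp
    then show ?thesis by (metis distrib_right mult.commute)
  qed
  ultimately have "N * p \<le> q * card (initial_residues q p \<inter> {..<N})"
    unfolding card_initial_residues_lessThan[OF assms(1,2)] by (simp add: algebra_simps)
  then have "real N * real p \<le> real q * real (card (initial_residues q p \<inter> {..<N}))"
    by (metis of_nat_le_iff of_nat_mult)
  then show ?thesis
    using assms by (simp add: field_simps)
qed

lemma mu_low_initial_residues:
  assumes "0 < q" "p \<le> q"
  shows "mu_low (initial_residues q p) UNIV = ereal (real p / real q)"
proof (rule antisym)
  let ?density = "\<lambda>n. ereal (real (card (initial_residues q p \<inter> {..<Suc n})) / real (Suc n))"
  define r where "r k = Suc k * q - 1" for k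
  have "strict_mono r"
    using assms(1) by (simp add: r_def strict_mono_def diff_less_mono)
  moreover have "?density (r k) = ereal (real p / real q)" for k
  proof -
    have "Suc (r k) = Suc k * q"
      using assms(1) by (simp add: r_def)
    moreover have "card (initial_residues q p \<inter> {..<Suc k * q}) = Suc k * p"
      using assms by (simp add: card_initial_residues_lessThan)
    ultimately show ?thesis
      using assms(1) by (simp only: of_nat_mult) simp
  qed
  ultimately have "liminf (?density \<circ> r) = ereal (real p / real q)"
    by (simp add: comp_def Liminf_const)
  then show "mu_low (initial_residues q p) UNIV \<le> ereal (real p / real q)"
    using liminf_subseq_mono[OF \<open>strict_mono r\<close>, of ?density] by (simp add: mu_low_UNIV)
  show "ereal (real p / real q) \<le> mu_low (initial_residues q p) UNIV"
    unfolding mu_low_UNIV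
    by (intro Liminf_bounded always_eventually allI)
      (simp only: ereal_less_eq initial_residues_density_lower_bound[OF assms zero_less_Suc])
qed

lemma infinite_initial_residues:
  assumes "0 < q" "0 < p"
  shows "infinite (initial_residues q p)"
  unfolding infinite_nat_iff_unbounded_le
proof
  fix m
  have "m * q \<in> initial_residues q p" "m \<le> m * q"
    using assms by (simp_all add: initial_residues_def)
  then show "\<exists>n\<ge>m. n \<in> initial_residues q p" by blast
qed

lemma is_collection_initial_residues:
  "is_collection {initial_residues q p | q p. 0 < q \<and> 0 < p}"
proof -
  have "{initial_residues q p | q p. 0 < q \<and> 0 < p}
      = case_prod initial_residues ` {(q, p). 0 < q \<and> 0 < p}"
    by auto
  then show ?thesis
    unfolding is_collection_def using infinite_initial_residues by auto
qed

lemma fraction_approximation_above: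
  fixes r \<epsilon> :: real
  assumes "0 \<le> r" "r \<le> 1" "0 < \<epsilon>"
  obtains p q :: nat where "0 < p" "p \<le> q" "r \<le> p / q" "p / q < r + \<epsilon>"
proof -
  obtain m where m: "inverse (real (Suc m)) < \<epsilon>"
    using reals_Archimedean[OF assms(3)] by blast
  define q where "q = Suc m"
  define p where "p = max 1 (nat \<lceil>r * q\<rceil>)"
  have "r * q \<le> p"
    unfolding p_def by linarith
  moreover have "p \<le> r * q + 1"
    using assms(1) unfolding p_def by (simp add: of_nat_max)
  moreover have "p \<le> q"
    using assms(1,2) unfolding p_def q_def by (simp add: mult_left_le_one_le ceiling_le_iff nat_le_iff)
  moreover have "0 < q"
    unfolding q_def by simp
  ultimately show ?thesis
    using m by (intro that[of p q]) (simp_all add: p_def q_def field_simps)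
qed

theorem theorem6p4:
  fixes c :: real
  assumes "0 \<le> c" and "c \<le> 1"
  shows "\<exists>\<L>. is_collection \<L> \<and>
           (\<forall>\<epsilon>>0. \<forall>G. is_set_generator G \<longrightarrow>
              \<not> (generates_in_limit_omit c \<L> G \<and>
                  achieves_set_upper_density_omit c \<L> G (1 - c + \<epsilon>)))"
proof (intro exI conjI allI impI notI)
  let ?\<L> = "{initial_residues q p | q p. 0 < q \<and> 0 < p}"
  show "is_collection ?\<L>"
    by (rule is_collection_initial_residues)
  fix \<epsilon> :: real and G
  assume "0 < \<epsilon>" and G: "generates_in_limit_omit c ?\<L> G \<and>
    achieves_set_upper_density_omit c ?\<L> G (1 - c + \<epsilon>)"
  obtain p q :: nat where pq: "0 < p" "p \<le> q" "1 - c \<le> p / q" "p / q < 1 - c + \<epsilon>"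
    using fraction_approximation_above[of "1 - c" \<epsilon>] assms \<open>0 < \<epsilon>\<close> by auto
  define K where "K = initial_residues q p"
  have "K \<in> ?\<L>"
    using pq unfolding K_def by (intro CollectI exI[of _ q] exI[of _ p]) simp
  have "UNIV \<in> ?\<L>"
    by (intro CollectI exI[of _ 1]) (simp add: initial_residues_def)
  have "infinite K"
    using pq by (simp add: K_def infinite_initial_residues)
  have density: "mu_low K UNIV = ereal (p / q)"
    using pq by (simp add: K_def mu_low_initial_residues)
  have "is_omission_enum c (enumerate K) K"
    using \<open>infinite K\<close> assms(1) by (intro is_omission_enum_enumerate) (simp_all add: mu_low_self)
  moreover have "is_omission_enum c (enumerate K) UNIV"
    using \<open>infinite K\<close> pq(3) density by (intro is_omission_enum_enumerate) simp_all
  ultimately have "limsup (\<lambda>n. mu_low (gen_out G (enumerate K) n) UNIV) \<le> mu_low K UNIV"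
    and "ereal (1 - c + \<epsilon>) \<le> limsup (\<lambda>n. mu_low (gen_out G (enumerate K) n) UNIV)"
    using G \<open>K \<in> ?\<L>\<close> \<open>UNIV \<in> ?\<L>\<close> limsup_mu_low_gen_out_le
    unfolding achieves_set_upper_density_omit_def by blast+
  with density pq(4) show False
    by (metis ereal_less_eq(3) linorder_not_le order.trans)
qed

end
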